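(* Let $\mathcal{P}$ be a probability distribution on $\mathbb{R}$ and let $X$ be a random variable with distribution $\mathcal{P}$. Define $g(p) := \inf\{r \in \mathbb{R} : \mathbb{P}(X \geq r) \leq p\}$ for $0<p<1$. Assume that $\mathbb{E}|X| < \infty$, that $g(p) \to \infty$ as $p \to 0^+$, and that $g$ is slowly varying at zero, i.e. $g(\lambda p)/g(p) \to 1$ as $p \to 0^+$ for every fixed $\lambda > 0$. For $n\in\mathbb{N}$ let $M_n = \max_{1\le i\le n} X_i$, where $X_1,\dots,X_n$ are i.i.d. with distribution $\mathcal{P}$. Then $$\mathbb{E} M_n \geq g(1/n)(1+o(1)) \quad \text{as } n\to\infty.$$ *)

theory Defs
  imports "HOL-Probability.Probability"
begin

definition upper_quantile :: "real measure \<Rightarrow> real \<Rightarrow> real" where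
  "upper_quantile P p = Inf {r. measure P {x \<in> space P. r \<le> x} \<le> p}"

definition expected_max :: "real measure \<Rightarrow> nat \<Rightarrow> real" where
  "expected_max P n =
     integral\<^sup>L (PiM {1..n} (\<lambda>_. P)) (\<lambda>x. Max ((\<lambda>i. x i) ` {1..n}))"

end

theory Submission
  imports Defs
begin

text \<open>
  For a level \<open>t\<close> with tail probability \<open>p = P(X \<ge> t)\<close> we have pointwise
  \<open>M\<^sub>n \<ge> t \<cdot> 1{M\<^sub>n \<ge> t} - |X\<^sub>1|\<close>, hence \<open>E M\<^sub>n \<ge> t (1 - (1 - p)\<^sup>n) - E|X|\<close>.
  Taking \<open>t\<close> just below \<open>g(L/n)\<close> gives \<open>p > L/n\<close>, so
  \<open>E M\<^sub>n \<ge> (1 - e\<^sup>-\<^sup>L) g(L/n) - O(1)\<close>. Slow variation turns \<open>g(L/n)\<close> into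
  \<open>g(1/n)(1 + o(1))\<close>, \<open>g(1/n) \<rightarrow> \<infinity>\<close> absorbs the constant, and \<open>L\<close> is arbitrary.
\<close>

lemma filterlim_const_divide_real_at_right_0:
  assumes "0 < c"
  shows "filterlim (\<lambda>n::nat. c / real n) (at_right 0) sequentially"
proof (rule tendsto_imp_filterlim_at_right)
  show "(\<lambda>n. c / real n) \<longlonglongrightarrow> 0"
    by (rule lim_const_over_n)
  show "\<forall>\<^sub>F n in sequentially. 0 < c / real n"
    using eventually_gt_at_top[of "0::nat"] by eventually_elim (use assms in auto)
qed

lemma eventually_ge_mult_one_plus_vanishing:
  fixes f g :: "'a \<Rightarrow> real"
  assumes g_pos: "\<forall>\<^sub>F x in F. 0 < g x"
    and lower: "\<And>\<epsilon>. 0 < \<epsilon> \<Longrightarrow> \<forall>\<^sub>F x in F. (1 - \<epsilon>) * g x \<le> f x"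
  shows "\<exists>h. (h \<longlongrightarrow> 0) F \<and> (\<forall>\<^sub>F x in F. g x * (1 + h x) \<le> f x)"
proof -
  define h where "h x = min 0 (f x / g x - 1)" for x
  have "(h \<longlongrightarrow> 0) F"
  proof (rule order_tendstoI)
    fix b :: real
    assume "b < 0"
    then have "0 < - b / 2"
      by simp
    from lower[OF this] g_pos show "\<forall>\<^sub>F x in F. b < h x"
    proof eventually_elim
      case (elim x)
      then have "1 + b / 2 \<le> f x / g x"
        by (simp add: field_simps)
      with \<open>b < 0\<close> show ?case
        by (simp add: h_def)
    qed
  qed (auto simp: h_def min_less_iff_disj)
  moreover from g_pos have "\<forall>\<^sub>F x in F. g x * (1 + h x) \<le> f x"
  proof eventually_elim
    case (elim x)
    have "g x * (1 + h x) \<le> g x * (f x / g x)"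
      using elim by (intro mult_left_mono) (auto simp: h_def)
    with elim show ?case
      by simp
  qed
  ultimately show ?thesis
    by blast
qed

lemma (in prob_space) integrable_PiM_component:
  fixes f :: "'a \<Rightarrow> 'b::{banach, second_countable_topology}"
  assumes "i \<in> I" "integrable M f"
  shows "integrable (PiM I (\<lambda>_. M)) (\<lambda>x. f (x i))"
proof -
  have "distr (PiM I (\<lambda>_. M)) M (\<lambda>x. x i) = M"
    by (rule distr_PiM_component) (use prob_space_axioms assms(1) in auto)
  with assms(2) have "integrable (distr (PiM I (\<lambda>_. M)) M (\<lambda>x. x i)) f"
    by simp
  then show ?thesis
    by (rule integrable_distr[OF measurable_component_singleton[OF assms(1)]])
qed

lemma (in prob_space) integral_PiM_component:
  fixes f :: "'a \<Rightarrow> 'b::{banach, second_countable_topology}"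
  assumes "i \<in> I" "f \<in> borel_measurable M"
  shows "(\<integral>x. f (x i) \<partial>PiM I (\<lambda>_. M)) = (\<integral>x. f x \<partial>M)"
proof -
  have "distr (PiM I (\<lambda>_. M)) M (\<lambda>x. x i) = M"
    by (rule distr_PiM_component) (use prob_space_axioms assms(1) in auto)
  with integral_distr[OF measurable_component_singleton[OF assms(1)] assms(2)] show ?thesis
    by simp
qed

context real_distribution
begin

lemma tail_prob_eq: "measure M {x. t \<le> x} = 1 - measure M {x. x < t}"
proof -
  have "{x. t \<le> x} = space M - {x. x < t}"
    by auto
  also have "prob \<dots> = 1 - prob {x. x < t}"
    by (rule prob_compl) measurable
  finally show ?thesis .
qed

lemma eventually_tail_prob_gt:
  assumes "q < 1"
  shows "\<forall>\<^sub>F r in at_bot. q < measure M {x. r \<le> x}"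
proof -
  have "\<forall>\<^sub>F r in at_bot. cdf M r < 1 - q"
    using cdf_lim_at_bot assms by (intro order_tendstoD) auto
  then show ?thesis
  proof eventually_elim
    case (elim r)
    have "measure M {x. x < r} \<le> cdf M r"
      unfolding cdf_def by (rule finite_measure_mono) auto
    with elim show ?case
      by (simp add: tail_prob_eq)
  qed
qed

lemma tail_prob_gt_of_less_upper_quantile:
  assumes "q < 1" "t < upper_quantile M q"
  shows "q < measure M {x. t \<le> x}"
proof (rule ccontr)
  define S where "S = {r. measure M {x. r \<le> x} \<le> q}"
  obtain r\<^sub>0 where r\<^sub>0: "\<And>r. r \<le> r\<^sub>0 \<Longrightarrow> q < measure M {x. r \<le> x}"
    using eventually_tail_prob_gt[OF assms(1)] by (auto simp: eventually_at_bot_linorder)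
  have "bdd_below S"
  proof (rule bdd_belowI)
    fix s
    assume "s \<in> S"
    then show "r\<^sub>0 \<le> s"
      using r\<^sub>0[of s] by (cases "s \<le> r\<^sub>0") (auto simp: S_def)
  qed
  moreover assume "\<not> q < measure M {x. t \<le> x}"
  then have "t \<in> S"
    by (simp add: S_def)
  ultimately have "Inf S \<le> t"
    by (rule cInf_lower[rotated])
  with assms(2) show False
    by (simp add: upper_quantile_def S_def)
qed

lemma integrable_Max_PiM:
  assumes "integrable M (\<lambda>x. x)" "finite I" "I \<noteq> {}"
  shows "integrable (PiM I (\<lambda>_. M)) (\<lambda>x. Max (x ` I))"
proof (rule Bochner_Integration.integrable_bound)
  show "integrable (PiM I (\<lambda>_. M)) (\<lambda>x. \<Sum>i\<in>I. \<bar>x i\<bar>)"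
    using assms by (intro Bochner_Integration.integrable_sum Bochner_Integration.integrable_abs
        integrable_PiM_component)
  show "(\<lambda>x. Max (x ` I)) \<in> borel_measurable (PiM I (\<lambda>_. M))"
    using assms(2) by measurable
  show "AE x in PiM I (\<lambda>_. M). norm (Max (x ` I)) \<le> norm (\<Sum>i\<in>I. \<bar>x i\<bar>)"
  proof (rule AE_I2)
    fix x :: "_ \<Rightarrow> real"
    have "Max (x ` I) \<in> x ` I"
      using assms(2,3) by (intro Max_in) auto
    then obtain j where j: "j \<in> I" "Max (x ` I) = x j"
      by auto
    then have "\<bar>x j\<bar> \<le> (\<Sum>i\<in>I. \<bar>x i\<bar>)"
      using assms(2) by (intro member_le_sum) auto
    with j show "norm (Max (x ` I)) \<le> norm (\<Sum>i\<in>I. \<bar>x i\<bar>)"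
      by simp
  qed
qed

lemma prob_Max_PiM_ge:
  assumes "finite I" "I \<noteq> {}"
  shows "measure (PiM I (\<lambda>_. M)) {x \<in> space (PiM I (\<lambda>_. M)). t \<le> Max (x ` I)} =
    1 - (1 - measure M {x. t \<le> x}) ^ card I"
proof -
  interpret product: finite_product_prob_space "\<lambda>_. M" I
    using assms(1) by unfold_locales
  let ?E = "{x \<in> space (PiM I (\<lambda>_. M)). t \<le> Max (x ` I)}"
  have "Max (x ` I) < t \<longleftrightarrow> (\<forall>i\<in>I. x i < t)" for x :: "_ \<Rightarrow> real"
    using assms by simp
  then have "space (PiM I (\<lambda>_. M)) - ?E = (\<Pi>\<^sub>E i\<in>I. {x. x < t})"
    by (auto simp: space_PiM PiE_iff simp flip: not_le)
  then have "product.prob (space (PiM I (\<lambda>_. M)) - ?E) = measure M {x. x < t} ^ card I"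
    by (simp add: product.prob_times)
  moreover have "?E \<in> sets (PiM I (\<lambda>_. M))"
    using assms(1) by measurable
  ultimately show ?thesis
    by (simp add: product.prob_compl tail_prob_eq)
qed

lemma integral_Max_PiM_ge:
  assumes "integrable M (\<lambda>x. x)" "finite I" "I \<noteq> {}"
  shows "t * (1 - (1 - measure M {x. t \<le> x}) ^ card I) - (\<integral>x. \<bar>x\<bar> \<partial>M)
    \<le> (\<integral>x. Max (x ` I) \<partial>PiM I (\<lambda>_. M))"
proof -
  let ?Q = "PiM I (\<lambda>_. M)"
  let ?E = "{x \<in> space ?Q. t \<le> Max (x ` I)}"
  interpret product: finite_product_prob_space "\<lambda>_. M" I
    using assms(2) by unfold_locales
  obtain i where i: "i \<in> I"
    using assms(3) by blast
  have E: "?E \<in> sets ?Q"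
    using assms(2) by measurable
  have int_E: "integrable ?Q (\<lambda>x. t * indicator ?E x :: real)"
    using E by (intro integrable_mult_right integrable_real_indicator)
      (auto simp: less_top[symmetric] product.emeasure_finite)
  have int_i: "integrable ?Q (\<lambda>x. \<bar>x i\<bar>)"
    using assms(1) i by (intro integrable_PiM_component) auto
  have "t * measure ?Q ?E - (\<integral>x. \<bar>x\<bar> \<partial>M) =
    t * (\<integral>x. indicator ?E x \<partial>?Q) - (\<integral>x. \<bar>x i\<bar> \<partial>?Q)"
    using i by (simp add: Int_absorb2 integral_PiM_component)
  also have "\<dots> = (\<integral>x. t * indicator ?E x - \<bar>x i\<bar> \<partial>?Q)"
    by (simp only: Bochner_Integration.integral_diff[OF int_E int_i] integral_mult_right_zero)
  also have "\<dots> \<le> (\<integral>x. Max (x ` I) \<partial>?Q)"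
  proof (rule integral_mono)
    fix x :: "_ \<Rightarrow> real"
    have "x i \<le> Max (x ` I)"
      using assms(2) i by simp
    then have "- Max (x ` I) \<le> \<bar>x i\<bar>"
      using abs_ge_minus_self[of "x i"] by linarith
    then show "t * indicator ?E x - \<bar>x i\<bar> \<le> Max (x ` I)"
      by (cases "x \<in> ?E") auto
  qed (intro Bochner_Integration.integrable_diff int_E int_i integrable_Max_PiM assms)+
  finally show ?thesis
    using assms(2,3) by (simp add: prob_Max_PiM_ge)
qed

lemma expected_max_ge_of_less_upper_quantile:
  assumes "integrable M (\<lambda>x. x)" "0 < L" "L < real n" "0 \<le> t" "t < upper_quantile M (L / real n)"
  shows "(1 - exp (- L)) * t - (\<integral>x. \<bar>x\<bar> \<partial>M) \<le> expected_max M n"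
proof -
  define q where "q = L / real n"
  define p where "p = measure M {x. t \<le> x}"
  have q: "0 < q" "q < 1"
    using assms(2,3) by (auto simp: q_def field_simps)
  have "q < p"
    unfolding p_def using assms(5) q by (intro tail_prob_gt_of_less_upper_quantile) (auto simp: q_def)
  have "(1 - p) ^ n \<le> (1 - q) ^ n"
    using \<open>q < p\<close> q prob_le_1[of "{x. t \<le> x}"] by (intro power_mono) (auto simp: p_def)
  also have "\<dots> \<le> exp (- q) ^ n"
    using q by (intro power_mono) (auto simp: exp_ge_add_one_self[of "- q", simplified])
  also have "\<dots> = exp (- L)"
    using assms(2,3) by (simp add: q_def flip: exp_of_nat_mult)
  finally have "(1 - exp (- L)) * t \<le> (1 - (1 - p) ^ n) * t"
    using assms(4) by (intro mult_right_mono) auto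
  moreover have "t * (1 - (1 - p) ^ n) - (\<integral>x. \<bar>x\<bar> \<partial>M) \<le> expected_max M n"
    using integral_Max_PiM_ge[OF assms(1), of "{1..n}" t] assms(2,3)
    by (simp add: p_def expected_max_def)
  ultimately show ?thesis
    by (simp add: mult.commute)
qed

lemma eventually_expected_max_ge:
  assumes int: "integrable M (\<lambda>x. x)"
    and g_top: "filterlim (upper_quantile M) at_top (at_right 0)"
    and slow: "\<And>c::real. c > 0 \<Longrightarrow>
      ((\<lambda>p. upper_quantile M (c * p) / upper_quantile M p) \<longlongrightarrow> 1) (at_right 0)"
    and "0 < \<epsilon>"
  shows "\<forall>\<^sub>F n in sequentially. (1 - \<epsilon>) * upper_quantile M (1 / real n) \<le> expected_max M n"
proof -
  obtain L where "0 < L" "exp (- L) < \<epsilon> / 2"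
  proof
    show "0 < max 1 (ln (2 / \<epsilon>) + 1)"
      by simp
    have "exp (- max 1 (ln (2 / \<epsilon>) + 1)) < exp (- ln (2 / \<epsilon>))"
      by simp
    then show "exp (- max 1 (ln (2 / \<epsilon>) + 1)) < \<epsilon> / 2"
      using \<open>0 < \<epsilon>\<close> by (simp add: exp_minus)
  qed
  define a where "a = 1 - exp (- L)"
  define C where "C = (\<integral>x. \<bar>x\<bar> \<partial>M)"
  define G where "G n = upper_quantile M (1 / real n)" for n :: nat
  define H where "H n = upper_quantile M (L / real n)" for n :: nat
  have G_top: "filterlim G at_top sequentially"
    unfolding G_def using filterlim_compose[OF g_top filterlim_const_divide_real_at_right_0] by simp
  have H_top: "filterlim H at_top sequentially"
    unfolding H_def using filterlim_compose[OF g_top filterlim_const_divide_real_at_right_0] \<open>0 < L\<close>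
    by simp
  have "(\<lambda>n. H n / G n) \<longlonglongrightarrow> 1"
    using filterlim_compose[OF slow[OF \<open>0 < L\<close>] filterlim_const_divide_real_at_right_0[of 1]]
    by (simp add: H_def G_def)
  moreover have "(\<lambda>n. inverse (G n)) \<longlonglongrightarrow> 0"
    using G_top by (rule tendsto_inverse_0_at_top)
  ultimately have "(\<lambda>n. (H n / G n) * a - (a + C) * inverse (G n)) \<longlonglongrightarrow> 1 * a - (a + C) * 0"
    by (intro tendsto_intros)
  then have "\<forall>\<^sub>F n in sequentially. a - \<epsilon> / 2 < (H n / G n) * a - (a + C) * inverse (G n)"
    using \<open>0 < \<epsilon>\<close> by (intro order_tendstoD) auto
  moreover have "\<forall>\<^sub>F n in sequentially. 0 < G n"
    using G_top by (simp add: filterlim_at_top_dense)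
  moreover have "\<forall>\<^sub>F n in sequentially. 1 < H n"
    using H_top by (simp add: filterlim_at_top_dense)
  moreover have "\<forall>\<^sub>F n in sequentially. L < real n"
    using filterlim_real_sequentially by (simp add: filterlim_at_top_dense)
  ultimately show ?thesis
  proof eventually_elim
    case (elim n)
    \<comment> \<open>\<open>H n - 1\<close> rather than \<open>H n\<close>: the level must lie strictly below the quantile\<close>
    have "a * (H n - 1) - C \<le> expected_max M n"
      using expected_max_ge_of_less_upper_quantile[OF int \<open>0 < L\<close>, of n "H n - 1"] elim
      by (simp add: a_def C_def H_def)
    then have "(a * (H n - 1) - C) / G n \<le> expected_max M n / G n"
      using elim by (intro divide_right_mono) auto
    moreover have "(H n / G n) * a - (a + C) * inverse (G n) = (a * (H n - 1) - C) / G n"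
      using elim by (simp add: field_simps)
    ultimately have "(H n / G n) * a - (a + C) * inverse (G n) \<le> expected_max M n / G n"
      by simp
    with elim \<open>exp (- L) < \<epsilon> / 2\<close> have "1 - \<epsilon> < expected_max M n / G n"
      by (simp add: a_def)
    with elim show ?case
      by (simp add: G_def field_simps)
  qed
qed

end

theorem proposition2:
  fixes P :: "real measure"
  assumes "prob_space P"
    and "sets P = sets borel"
    and "integrable P (\<lambda>x. x)"
    and "filterlim (upper_quantile P) at_top (at_right 0)"
    and "\<And>c::real. c > 0 \<Longrightarrow>
           ((\<lambda>p. upper_quantile P (c * p) / upper_quantile P p) \<longlongrightarrow> 1) (at_right 0)"
  shows "\<exists>h :: nat \<Rightarrow> real. h \<longlonglongrightarrow> 0 \<and>
           (\<forall>\<^sub>F n in sequentially.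
              expected_max P n \<ge> upper_quantile P (1 / real n) * (1 + h n))"
proof (rule eventually_ge_mult_one_plus_vanishing)
  interpret real_distribution P
    using assms(1,2) by (simp add: real_distribution_def real_distribution_axioms_def)
  show "\<forall>\<^sub>F n in sequentially. 0 < upper_quantile P (1 / real n)"
    using filterlim_compose[OF assms(4) filterlim_const_divide_real_at_right_0[of 1]]
    by (simp add: filterlim_at_top_dense)
  show "\<forall>\<^sub>F n in sequentially. (1 - \<epsilon>) * upper_quantile P (1 / real n) \<le> expected_max P n"
    if "0 < \<epsilon>" for \<epsilon>
    using eventually_expected_max_ge[OF assms(3-5) that] .
qed

end
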